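(* Let $t_0,t_1$ be terms and $E$ a pure context with $k\notin\mathrm{fv}(t_1)$ and $x\notin\mathrm{fv}(E)$, such that $(\lambda x.E[\mathcal Sk.t_0])\,t_1$ and $E[\mathcal Sk.((\lambda x.t_0)\,t_1)]$ are closed. Then $(\lambda x.E[\mathcal Sk.t_0])\,t_1\approx^p_{\emptyset}E[\mathcal Sk.((\lambda x.t_0)\,t_1)]$.
   Context: Terms of $\lambda_S$: $t ::= x \mid \lambda x.t \mid t\,t \mid \mathcal{S}k.t \mid \langle t\rangle$ (shift binds $k$; $\langle\cdot\rangle$ reset), up to $\alpha$-conversion; $\mathrm{fv}(t)$ free variables. Values $v::=\lambda x.t$. Pure contexts $E ::= \Box \mid v\,E \mid E\,t$; evaluation contexts $F ::= \Box \mid v\,F \mid F\,t \mid \langle F\rangle$. Reduction: $F[(\lambda x.t)v]\to F[t\{v/x\}]$; $F[\langle E[\mathcal Sk.t]\rangle]\to F[\langle t\{\lambda x.\langle E[x]\rangle/k\}\rangle]$ ($x\notin\mathrm{fv}(E)$); $F[\langle v\rangle]\to F[v]$; $\to^*$ reflexive-transitive closure. Program: term $\langle t\rangle$ (ranged over by $p$). Closures: for $R$ a relation on closed terms, $\widetilde R$ is the smallest relation containing $R$, all $(x,x)$, closed under all term constructors, restricted to closed terms; $\widehat R$ is the smallest relation on closed evaluation contexts with $\Box\widehat R\Box$, $v_0F_0\widehat Rv_1F_1$ if $F_0\widehat RF_1,v_0\widetilde Rv_1$; $F_0t_0\widehat RF_1t_1$ if $F_0\widehat RF_1,t_0\widetilde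 Rt_1$; $\langle F_0\rangle\widehat R\langle F_1\rangle$ if $F_0\widehat RF_1$. Environmental bisimilarity for programs: an environment $\mathcal E$ is a relation on closed values; an environmental relation $\mathcal X$ is a set of environments and triples $(\mathcal E,t_0,t_1)$, $t_0,t_1$ closed, written $t_0\mathcal X_{\mathcal E}t_1$. $\mathcal X$ is an environmental bisimulation for programs if (1) if $t_0\mathcal X_{\mathcal E}t_1$ and $t_0,t_1$ are not both programs, then for all pure $E_0\widehat{\mathcal E}E_1$, $\langle E_0[t_0]\rangle\mathcal X_{\mathcal E}\langle E_1[t_1]\rangle$; (2) if $p_0\mathcal X_{\mathcal E}p_1$: (a) $p_0\to p_0'$ (program) implies $p_1\to^*p_1'$ (program) with $p_0'\mathcal X_{\mathcal E}p_1'$; (b) $p_0\to v_0$ implies $p_1\to^*v_1$ and $\{(v_0,v_1)\}\cup\mathcal E\in\mathcal X$; (c) symmetric conditions; (3) for $\mathcal E\in\mathcal X$, $(\lambda x.t_0)\mathcal E(\lambda x.t_1)$ and $v_0\widetilde{\mathcal E}v_1$ imply $t_0\{v_0/x\}\mathcal X_{\mathcal E}t_1\{v_1/x\}$. $\approx^p$ is the largest such relation; $t_0\approx^p_{\emptyset}t_1$ means $(\emptyset,t_0,t_1)\in\approx^p$ (defined on closed terms only). *)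

theory Defs
  imports Main
begin

section \<open>Syntax of lambda_S (named variables, raw terms)\<close>

type_synonym var = nat

datatype trm =
    Var var
  | Lam var trm
  | App trm trm
  | Shift var trm
  | Reset trm

fun fv :: "trm \<Rightarrow> var set" where
  "fv (Var x) = {x}"
| "fv (Lam x t) = fv t - {x}"
| "fv (App s t) = fv s \<union> fv t"
| "fv (Shift k t) = fv t - {k}"
| "fv (Reset t) = fv t"

definition closed :: "trm \<Rightarrow> bool" where
  "closed t \<longleftrightarrow> fv t = {}"

definition is_val :: "trm \<Rightarrow> bool" where
  "is_val t \<longleftrightarrow> (\<exists>x s. t = Lam x s)"

definition is_prog :: "trm \<Rightarrow> bool" where
  "is_prog t \<longleftrightarrow> (\<exists>s. t = Reset s)"

text \<open>It is only ever applied with a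
closed substituted term (all terms handled by the semantics are closed), in
which case no variable capture can occur and this is the usual
capture-avoiding substitution.\<close>
fun subst :: "var \<Rightarrow> trm \<Rightarrow> trm \<Rightarrow> trm" where
  "subst x v (Var y) = (if x = y then v else Var y)"
| "subst x v (Lam y t) = (if x = y then Lam y t else Lam y (subst x v t))"
| "subst x v (App s t) = App (subst x v s) (subst x v t)"
| "subst x v (Shift k t) = (if x = k then Shift k t else Shift k (subst x v t))"
| "subst x v (Reset t) = Reset (subst x v t)"

datatype ctx =
    Hole
  | CArg trm ctx
  | CFun ctx trm
  | CReset ctx

fun plug :: "ctx \<Rightarrow> trm \<Rightarrow> trm" where
  "plug Hole t = t"
| "plug (CArg v F) t = App v (plug F t)"
| "plug (CFun F s) t = App (plug F t) s"
| "plug (CReset F) t = Reset (plug F t)"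

fun fvc :: "ctx \<Rightarrow> var set" where
  "fvc Hole = {}"
| "fvc (CArg v F) = fv v \<union> fvc F"
| "fvc (CFun F s) = fvc F \<union> fv s"
| "fvc (CReset F) = fvc F"

fun pure :: "ctx \<Rightarrow> bool" where
  "pure Hole = True"
| "pure (CArg v F) = (is_val v \<and> pure F)"
| "pure (CFun F s) = pure F"
| "pure (CReset F) = False"

fun evctx :: "ctx \<Rightarrow> bool" where
  "evctx Hole = True"
| "evctx (CArg v F) = (is_val v \<and> evctx F)"
| "evctx (CFun F s) = evctx F"
| "evctx (CReset F) = evctx F"

inductive step :: "trm \<Rightarrow> trm \<Rightarrow> bool" where
  beta: "\<lbrakk>evctx F; is_val v\<rbrakk> \<Longrightarrow>
     step (plug F (App (Lam x t) v)) (plug F (subst x v t))"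
| shift: "\<lbrakk>evctx F; pure E; x \<notin> fvc E\<rbrakk> \<Longrightarrow>
     step (plug F (Reset (plug E (Shift k t))))
          (plug F (Reset (subst k (Lam x (Reset (plug E (Var x)))) t)))"
| reset: "\<lbrakk>evctx F; is_val v\<rbrakk> \<Longrightarrow> step (plug F (Reset v)) (plug F v)"

abbreviation steps :: "trm \<Rightarrow> trm \<Rightarrow> bool" where
  "steps \<equiv> step\<^sup>*\<^sup>*"

type_synonym env = "(trm \<times> trm) set"

inductive tilde_raw :: "env \<Rightarrow> trm \<Rightarrow> trm \<Rightarrow> bool" for R :: env where
  base: "(t0, t1) \<in> R \<Longrightarrow> tilde_raw R t0 t1"
| var: "tilde_raw R (Var x) (Var x)"
| lam: "tilde_raw R t0 t1 \<Longrightarrow> tilde_raw R (Lam x t0) (Lam x t1)"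
| app: "\<lbrakk>tilde_raw R s0 s1; tilde_raw R t0 t1\<rbrakk> \<Longrightarrow> tilde_raw R (App s0 t0) (App s1 t1)"
| shift: "tilde_raw R t0 t1 \<Longrightarrow> tilde_raw R (Shift k t0) (Shift k t1)"
| reset: "tilde_raw R t0 t1 \<Longrightarrow> tilde_raw R (Reset t0) (Reset t1)"

definition tilde :: "env \<Rightarrow> trm \<Rightarrow> trm \<Rightarrow> bool" where
  "tilde R t0 t1 \<longleftrightarrow> tilde_raw R t0 t1 \<and> closed t0 \<and> closed t1"

inductive hat :: "env \<Rightarrow> ctx \<Rightarrow> ctx \<Rightarrow> bool" for R :: env where
  hole: "hat R Hole Hole"
| arg: "\<lbrakk>hat R F0 F1; tilde R v0 v1; is_val v0; is_val v1\<rbrakk> \<Longrightarrow>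
          hat R (CArg v0 F0) (CArg v1 F1)"
| fun_: "\<lbrakk>hat R F0 F1; tilde R t0 t1\<rbrakk> \<Longrightarrow> hat R (CFun F0 t0) (CFun F1 t1)"
| reset: "hat R F0 F1 \<Longrightarrow> hat R (CReset F0) (CReset F1)"

text \<open>An environmental relation X is given by its set of environments Es and its
set of triples Ts; (E, t0, t1) \<in> Ts means t0 X_E t1.\<close>

definition env_ok :: "env \<Rightarrow> bool" where
  "env_ok E \<longleftrightarrow> (\<forall>(v0, v1) \<in> E. is_val v0 \<and> is_val v1 \<and> closed v0 \<and> closed v1)"

definition env_bisim :: "env set \<Rightarrow> (env \<times> trm \<times> trm) set \<Rightarrow> bool" where
  "env_bisim Es Ts \<longleftrightarrow>
     (\<forall>E \<in> Es. env_ok E) \<and>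
     (\<forall>(E, t0, t1) \<in> Ts. env_ok E \<and> closed t0 \<and> closed t1) \<and>
     \<comment> \<open>(1)\<close>
     (\<forall>(E, t0, t1) \<in> Ts. \<not> (is_prog t0 \<and> is_prog t1) \<longrightarrow>
        (\<forall>E0 E1. pure E0 \<and> pure E1 \<and> hat E E0 E1 \<longrightarrow>
           (E, Reset (plug E0 t0), Reset (plug E1 t1)) \<in> Ts)) \<and>
     \<comment> \<open>(2)\<close>
     (\<forall>(E, p0, p1) \<in> Ts. is_prog p0 \<and> is_prog p1 \<longrightarrow>
        (\<forall>p0'. step p0 p0' \<and> is_prog p0' \<longrightarrow>
           (\<exists>p1'. steps p1 p1' \<and> is_prog p1' \<and> (E, p0', p1') \<in> Ts)) \<and>
        (\<forall>v0. step p0 v0 \<and> is_val v0 \<longrightarrow>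
           (\<exists>v1. steps p1 v1 \<and> is_val v1 \<and> insert (v0, v1) E \<in> Es)) \<and>
        (\<forall>p1'. step p1 p1' \<and> is_prog p1' \<longrightarrow>
           (\<exists>p0'. steps p0 p0' \<and> is_prog p0' \<and> (E, p0', p1') \<in> Ts)) \<and>
        (\<forall>v1. step p1 v1 \<and> is_val v1 \<longrightarrow>
           (\<exists>v0. steps p0 v0 \<and> is_val v0 \<and> insert (v0, v1) E \<in> Es))) \<and>
     \<comment> \<open>(3); binders are compared up to alpha-conversion\<close>
     (\<forall>E \<in> Es. \<forall>x0 s0 x1 s1 v0 v1.
        (Lam x0 s0, Lam x1 s1) \<in> E \<and> tilde E v0 v1 \<and> is_val v0 \<and> is_val v1 \<longrightarrow>
          (E, subst x0 v0 s0, subst x1 v1 s1) \<in> Ts)"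

text \<open>Environmental bisimilarity for programs (the largest such relation):
t0 \<approx>p_E t1.\<close>
definition bisim_p :: "env \<Rightarrow> trm \<Rightarrow> trm \<Rightarrow> bool" where
  "bisim_p E t0 t1 \<longleftrightarrow> (\<exists>Es Ts. env_bisim Es Ts \<and> (E, t0, t1) \<in> Ts)"

end

theory Submission
  imports Defs
begin

text \<open>Under a pure context \<open>G\<close>, the right-hand side \<open>\<langle>G[E[Sk.((\<lambda>x.t0) t1)]]\<rangle>\<close> first
  captures \<open>\<kappa> = \<lambda>y.\<langle>G[E[y]]\<rangle>\<close> and becomes \<open>\<langle>(\<lambda>x.t0{\<kappa>/k}) t1\<rangle>\<close>, while the
  left-hand side evaluates the argument \<open>t1\<close> to a value \<open>w\<close> and only then reaches the
  shift, capturing the same continuation; both sides thus end in \<open>t0\<close> with \<open>w\<close>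
  substituted for \<open>x\<close> and \<open>\<kappa>\<close> for \<open>k\<close>, and these substitutions of closed terms commute.
  The relation \<open>simrel\<close> is the compatible closure of these intermediate states; it is
  a weak simulation in both directions, and its closed pairs, together with the initial
  ones, form an environmental bisimulation whose environments are the pairs of
  \<open>simrel\<close>-related values.\<close>

lemma fv_plug [simp]: "fv (plug G t) = fvc G \<union> fv t"
  by (induction G) auto

lemma closed_App [simp]: "closed (App a b) \<longleftrightarrow> closed a \<and> closed b"
  by (auto simp: closed_def)

lemma closed_Lam [simp]: "closed (Lam z t) \<longleftrightarrow> fv t \<subseteq> {z}"
  by (auto simp: closed_def)

lemma closed_Reset [simp]: "closed (Reset a) \<longleftrightarrow> closed a"
  by (simp add: closed_def)

lemma closed_plug [simp]: "closed (plug G a) \<longleftrightarrow> fvc G = {} \<and> closed a"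
  by (auto simp: closed_def)

lemma is_val_plug [simp]: "is_val (plug G t) \<longleftrightarrow> G = Hole \<and> is_val t"
  by (cases G) (auto simp: is_val_def)

lemma plug_eq_Lam_iff [simp]: "plug G t = Lam y s \<longleftrightarrow> G = Hole \<and> t = Lam y s"
  by (cases G) auto

lemma is_val_simps [simp]:
  "is_val (Lam y t)" "\<not> is_val (Var y)" "\<not> is_val (App a b)"
  "\<not> is_val (Shift j s)" "\<not> is_val (Reset s)"
  by (auto simp: is_val_def)

lemma size_plug: "size t \<le> size (plug G t)"
  by (induction G) auto

lemma pure_imp_evctx: "pure G \<Longrightarrow> evctx G"
  by (induction G) auto

lemma subst_fresh: "z \<notin> fv t \<Longrightarrow> subst z v t = t"
  by (induction t) auto

lemma subst_closed: "closed t \<Longrightarrow> subst z v t = t"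
  by (simp add: closed_def subst_fresh)

lemma fv_subst: "fv (subst z v t) \<subseteq> (fv t - {z}) \<union> fv v"
  by (induction t) auto

lemma closed_subst: "fv t \<subseteq> {z} \<Longrightarrow> closed v \<Longrightarrow> closed (subst z v t)"
  using fv_subst[of z v t] by (auto simp: closed_def)

lemma subst_plug: "fvc G = {} \<Longrightarrow> subst z v (plug G t) = plug G (subst z v t)"
  by (induction G) (auto simp: subst_fresh)

lemma subst_subst_commute:
  "x \<noteq> k \<Longrightarrow> closed a \<Longrightarrow> closed b \<Longrightarrow> subst x a (subst k b t) = subst k b (subst x a t)"
  by (induction t) (auto simp: subst_closed)

fun comp_ctx :: "ctx \<Rightarrow> ctx \<Rightarrow> ctx" where
  "comp_ctx Hole G = G"
| "comp_ctx (CArg v F) G = CArg v (comp_ctx F G)"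
| "comp_ctx (CFun F s) G = CFun (comp_ctx F G) s"
| "comp_ctx (CReset F) G = CReset (comp_ctx F G)"

lemma plug_comp_ctx [simp]: "plug (comp_ctx F G) t = plug F (plug G t)"
  by (induction F) auto

lemma pure_comp_ctx [simp]: "pure F \<Longrightarrow> pure G \<Longrightarrow> pure (comp_ctx F G)"
  by (induction F) auto

lemma evctx_comp_ctx [simp]: "evctx F \<Longrightarrow> evctx G \<Longrightarrow> evctx (comp_ctx F G)"
  by (induction F) auto

lemma fvc_comp_ctx [simp]: "fvc (comp_ctx F G) = fvc F \<union> fvc G"
  by (induction F) auto

abbreviation ctx_cont :: "ctx \<Rightarrow> var \<Rightarrow> trm" where
  "ctx_cont G z \<equiv> Lam z (Reset (plug G (Var z)))"

text \<open>A structural presentation of \<open>step\<close>, which is easier to invert.\<close>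

inductive sos :: "trm \<Rightarrow> trm \<Rightarrow> bool" where
  beta: "is_val v \<Longrightarrow> sos (App (Lam y t) v) (subst y v t)"
| app_left: "sos s s' \<Longrightarrow> sos (App s t) (App s' t)"
| app_right: "is_val v \<Longrightarrow> sos t t' \<Longrightarrow> sos (App v t) (App v t')"
| reset: "sos t t' \<Longrightarrow> sos (Reset t) (Reset t')"
| reset_val: "is_val v \<Longrightarrow> sos (Reset v) v"
| shift: "pure G \<Longrightarrow> z \<notin> fvc G \<Longrightarrow> sos (Reset (plug G (Shift j s))) (Reset (subst j (ctx_cont G z) s))"

lemma sos_plug: "evctx F \<Longrightarrow> sos a b \<Longrightarrow> sos (plug F a) (plug F b)"
  by (induction F) (auto intro: sos.intros)

lemma step_plug: "step a b \<Longrightarrow> evctx G \<Longrightarrow> step (plug G a) (plug G b)"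
proof (induction rule: step.induct)
  case (beta F v x t)
  then show ?case using step.beta[of "comp_ctx G F" v x t] by simp
next
  case (shift F E x k t)
  then show ?case using step.shift[of "comp_ctx G F" E x k t] by simp
next
  case (reset F v)
  then show ?case using step.reset[of "comp_ctx G F" v] by simp
qed

lemma step_eq_sos: "step = sos"
proof (intro ext iffI)
  show "step a b \<Longrightarrow> sos a b" for a b
    by (induction rule: step.induct) (auto intro!: sos_plug intro: sos.intros)
  show "sos a b \<Longrightarrow> step a b" for a b
  proof (induction rule: sos.induct)
    case (beta v y t)
    then show ?case using step.beta[of Hole v y t] by simp
  next
    case (app_left s s' t)
    then show ?case using step_plug[of s s' "CFun Hole t"] by simp
  next
    case (app_right v t t')
    then show ?case using step_plug[of t t' "CArg v Hole"] by simp
  next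
    case (reset t t')
    then show ?case using step_plug[of t t' "CReset Hole"] by simp
  next
    case (reset_val v)
    then show ?case using step.reset[of Hole v] by simp
  next
    case (shift G z j s)
    then show ?case using step.shift[of Hole G z j s] by simp
  qed
qed

lemma sos_fv: "sos a b \<Longrightarrow> fv b \<subseteq> fv a"
proof (induction rule: sos.induct)
  case (beta v y t)
  then show ?case using fv_subst[of y v t] by auto
next
  case (shift G z j s)
  then show ?case using fv_subst[of j "ctx_cont G z" s] by auto
qed auto

lemma sos_closed: "sos a b \<Longrightarrow> closed a \<Longrightarrow> closed b"
  using sos_fv unfolding closed_def by blast

lemma sos_rtranclp_closed: "sos\<^sup>*\<^sup>* a b \<Longrightarrow> closed a \<Longrightarrow> closed b"
  by (induction rule: rtranclp_induct) (auto dest: sos_closed)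

lemma sos_rtranclp_plug: "sos\<^sup>*\<^sup>* a b \<Longrightarrow> evctx F \<Longrightarrow> sos\<^sup>*\<^sup>* (plug F a) (plug F b)"
  by (induction rule: rtranclp_induct) (auto intro: rtranclp.rtrancl_into_rtrancl sos_plug)

lemma val_not_sos: "is_val v \<Longrightarrow> \<not> sos v q"
  by (auto simp: is_val_def elim: sos.cases)

lemma pure_plug_Shift_not_sos: "pure G \<Longrightarrow> \<not> sos (plug G (Shift j s)) q"
proof (induction G arbitrary: q)
  case Hole
  then show ?case by (auto elim: sos.cases)
next
  case (CArg v F)
  show ?case
  proof
    assume "sos (plug (CArg v F) (Shift j s)) q"
    then show False
      using CArg by (cases rule: sos.cases) (auto dest: val_not_sos)
  qed
next
  case (CFun F s0)
  show ?case
  proof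
    assume "sos (plug (CFun F s0) (Shift j s)) q"
    then show False
      using CFun by (cases rule: sos.cases) (auto dest: val_not_sos)
  qed
qed simp

lemma pure_plug_Shift_inj:
  "pure G \<Longrightarrow> pure G' \<Longrightarrow> plug G (Shift j s) = plug G' (Shift j' s') \<Longrightarrow> G = G' \<and> j = j' \<and> s = s'"
proof (induction G arbitrary: G')
  case Hole
  then show ?case by (cases G') auto
next
  case (CArg v F)
  then show ?case by (cases G') auto
next
  case (CFun F s0)
  then show ?case by (cases G') auto
qed simp

lemma pure_plug_App_eq_plug_Shift:
  assumes "pure G" "pure G'" "is_val v" "plug G (App v u) = plug G' (Shift j s)"
  shows "\<exists>G''. pure G'' \<and> G' = comp_ctx G (CArg v G'') \<and> u = plug G'' (Shift j s)"
  using assms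
proof (induction G arbitrary: G')
  case Hole
  then show ?case by (cases G') auto
next
  case (CArg w F)
  then show ?case by (cases G') (auto dest: CArg.IH)
next
  case (CFun F s0)
  then show ?case by (cases G') (auto dest: CFun.IH)
qed simp

lemma sos_pure_plug_App_cases:
  assumes "pure G" "is_val v" "sos (plug G (App v u)) r"
  shows "(is_val u \<and> (\<exists>y t. v = Lam y t \<and> r = plug G (subst y u t))) \<or>
    (\<exists>u'. sos u u' \<and> r = plug G (App v u'))"
  using assms
proof (induction G arbitrary: r)
  case Hole
  then show ?case by (auto elim: sos.cases dest: val_not_sos)
next
  case (CArg w F)
  from CArg.prems(3) show ?case
    using CArg by (cases rule: sos.cases) (auto dest: val_not_sos)
next
  case (CFun F s0)
  from CFun.prems(3) show ?case
    using CFun by (cases rule: sos.cases) (auto dest: val_not_sos)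
qed simp

section \<open>The simulation relation\<close>

lemma tilde_raw_empty: "tilde_raw {} a b \<Longrightarrow> a = b"
  by (induction rule: tilde_raw.induct) auto

lemma hat_empty: "hat {} F0 F1 \<Longrightarrow> F0 = F1"
  by (induction rule: hat.induct) (auto simp: tilde_def dest: tilde_raw_empty)

lemma hat_fvc: "hat Env F0 F1 \<Longrightarrow> fvc F0 = {} \<and> fvc F1 = {}"
  by (induction rule: hat.induct) (auto simp: tilde_def closed_def)

locale shift_lifting =
  fixes x k :: var and t0 :: trm and E :: ctx
  assumes pure_E: "pure E" and x_neq_k: "x \<noteq> k" and closed_E: "fvc E = {}"
    and fv_t0: "fv t0 \<subseteq> {x, k}"
begin

definition body :: trm where
  "body = plug E (Shift k t0)"

text \<open>By its shift step, \<open>\<langle>G[E[Sk.((\<lambda>x.t0) t1)]]\<rangle>\<close> reduces to \<open>\<langle>shifted_fun G y t1\<rangle>\<close>.\<close>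

definition shifted_fun :: "ctx \<Rightarrow> var \<Rightarrow> trm" where
  "shifted_fun G y = Lam x (subst k (ctx_cont (comp_ctx G E) y) t0)"

lemma closed_Lam_body: "closed (Lam x body)"
  using closed_E fv_t0 by (auto simp: closed_def body_def)

lemma closed_shifted_fun: "fvc G = {} \<Longrightarrow> closed (shifted_fun G y)"
  using closed_E fv_t0 fv_subst[of k "ctx_cont (comp_ctx G E) y" t0]
  by (auto simp: closed_def shifted_fun_def)

lemma is_val_shifted_fun [simp]: "is_val (shifted_fun G y)"
  by (simp add: shifted_fun_def)

lemma subst_body: "subst x w body = plug E (Shift k (subst x w t0))"
  using x_neq_k closed_E by (simp add: body_def subst_plug)

inductive simrel :: "trm \<Rightarrow> trm \<Rightarrow> bool" where
  Var: "simrel (Var a) (Var a)"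
| Lam: "simrel s s' \<Longrightarrow> simrel (Lam a s) (Lam a s')"
| App: "simrel s s' \<Longrightarrow> simrel t t' \<Longrightarrow> simrel (App s t) (App s' t')"
| Shift: "simrel s s' \<Longrightarrow> simrel (Shift a s) (Shift a s')"
| Reset: "simrel s s' \<Longrightarrow> simrel (Reset s) (Reset s')"
| shifted: "pure G \<Longrightarrow> fvc G = {} \<Longrightarrow> simrel u u' \<Longrightarrow>
    simrel (Reset (plug G (App (Lam x body) u))) (Reset (App (shifted_fun G y) u'))"
| shifted_beta: "pure G \<Longrightarrow> fvc G = {} \<Longrightarrow> simrel w w' \<Longrightarrow> is_val w \<Longrightarrow> is_val w' \<Longrightarrow>
    closed w \<Longrightarrow> closed w' \<Longrightarrow>
    simrel (Reset (plug G (plug E (Shift k (subst x w t0))))) (Reset (App (shifted_fun G y) w'))"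
| \<comment> \<open>terms are not identified up to \<open>\<alpha>\<close>-conversion\<close>
  cont_alpha: "pure G \<Longrightarrow> fvc G = {} \<Longrightarrow> simrel (ctx_cont G z) (ctx_cont G y)"

inductive_cases simrel_AppE: "simrel (App a b) t'"
inductive_cases simrel_AppE': "simrel t (App a' b')"
inductive_cases simrel_ShiftE: "simrel (Shift j a) t'"
inductive_cases simrel_ShiftE': "simrel t (Shift j a')"
inductive_cases simrel_LamE [consumes 1, case_names Lam cont_alpha]: "simrel (Lam y s) t'"
inductive_cases simrel_LamE' [consumes 1, case_names Lam cont_alpha]: "simrel t (Lam y s')"
inductive_cases simrel_ResetE [consumes 1, case_names Reset shifted shifted_beta]: "simrel (Reset s) t'"
inductive_cases simrel_ResetE' [consumes 1, case_names Reset shifted shifted_beta]: "simrel t (Reset s')"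


lemma simrel_refl: "simrel t t"
  by (induction t) (auto intro: simrel.intros)

lemma simrel_is_val: "simrel a b \<Longrightarrow> is_val a \<longleftrightarrow> is_val b"
  by (cases rule: simrel.cases) auto

lemma simrel_is_prog: "simrel a b \<Longrightarrow> is_prog a \<longleftrightarrow> is_prog b"
  by (cases rule: simrel.cases) (auto simp: is_prog_def)

lemma simrel_subst:
  "simrel s s' \<Longrightarrow> simrel v v' \<Longrightarrow> closed v \<Longrightarrow> closed v' \<Longrightarrow> simrel (subst z v s) (subst z v' s')"
proof (induction rule: simrel.induct)
  case (shifted G u u' y)
  have "subst z v (Reset (plug G (App (Lam x body) u))) = Reset (plug G (App (Lam x body) (subst z v u)))"
    using shifted closed_Lam_body by (simp only: subst.simps(3,5) subst_plug subst_closed)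
  moreover have "subst z v' (Reset (App (shifted_fun G y) u')) = Reset (App (shifted_fun G y) (subst z v' u'))"
    using shifted closed_shifted_fun[of G y] by (simp only: subst.simps(3,5) subst_closed)
  ultimately show ?case using shifted by (auto intro!: simrel.shifted)
next
  case (shifted_beta G w w' y)
  have "closed (Reset (plug G (plug E (Shift k (subst x w t0)))))"
    using shifted_beta fv_t0 closed_E fv_subst[of x w t0] by (auto simp: closed_def)
  moreover have "closed (Reset (App (shifted_fun G y) w'))"
    using shifted_beta closed_shifted_fun[of G y] by simp
  ultimately show ?case
    using simrel.shifted_beta[OF shifted_beta(1-7), of y] by (simp only: subst_closed)
next
  case (cont_alpha G z' y)
  then have "closed (ctx_cont G z')" "closed (ctx_cont G y)" by auto
  then show ?case
    using simrel.cont_alpha[OF cont_alpha(1,2), of z' y] by (simp only: subst_closed)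
qed (auto intro: simrel.intros)

fun ctx_rel :: "ctx \<Rightarrow> ctx \<Rightarrow> bool" where
  "ctx_rel Hole Hole = True"
| "ctx_rel (CArg v F) (CArg v' F') = (simrel v v' \<and> ctx_rel F F')"
| "ctx_rel (CFun F s) (CFun F' s') = (ctx_rel F F' \<and> simrel s s')"
| "ctx_rel (CReset F) (CReset F') = ctx_rel F F'"
| "ctx_rel _ _ = False"

lemma ctx_rel_refl: "ctx_rel G G"
  by (induction G) (auto simp: simrel_refl)

lemma simrel_plug: "ctx_rel G G' \<Longrightarrow> simrel a a' \<Longrightarrow> simrel (plug G a) (plug G' a')"
  by (induction G G' rule: ctx_rel.induct) (auto intro: simrel.intros)

lemma simrel_ctx_cont: "ctx_rel G G' \<Longrightarrow> simrel (ctx_cont G z) (ctx_cont G' z)"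
  by (auto intro: simrel.intros simrel_plug)

lemma simrel_pure_plug_left:
  "pure G \<Longrightarrow> simrel (plug G a) t' \<Longrightarrow> \<exists>G' a'. t' = plug G' a' \<and> pure G' \<and> ctx_rel G G' \<and> simrel a a'"
proof (induction G arbitrary: t')
  case Hole
  then show ?case by (intro exI[of _ Hole]) auto
next
  case (CArg v F)
  then obtain b' c' where "t' = App b' c'" "simrel v b'" "simrel (plug F a) c'"
    by (auto elim: simrel_AppE)
  with CArg show ?case
    using simrel_is_val[of v b'] by (fastforce intro: exI[of _ "CArg b' _"])
next
  case (CFun F s)
  then obtain b' c' where "t' = App b' c'" "simrel (plug F a) b'" "simrel s c'"
    by (auto elim: simrel_AppE)
  with CFun show ?case by (fastforce intro: exI[of _ "CFun _ c'"])
qed simp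

lemma simrel_pure_plug_right:
  "pure G' \<Longrightarrow> simrel t (plug G' a') \<Longrightarrow> \<exists>G a. t = plug G a \<and> pure G \<and> ctx_rel G G' \<and> simrel a a'"
proof (induction G' arbitrary: t)
  case Hole
  then show ?case by (intro exI[of _ Hole]) auto
next
  case (CArg v F)
  then obtain b c where "t = App b c" "simrel b v" "simrel c (plug F a')"
    by (auto elim: simrel_AppE')
  with CArg show ?case
    using simrel_is_val[of b v] by (fastforce intro: exI[of _ "CArg b _"])
next
  case (CFun F s)
  then obtain b c where "t = App b c" "simrel b (plug F a')" "simrel c s"
    by (auto elim: simrel_AppE')
  with CFun show ?case by (fastforce intro: exI[of _ "CFun _ c"])
qed simp

section \<open>Simulation in both directions\<close>

lemma simrel_captured:
  assumes "pure G" "fvc G = {}" "simrel w w'" "closed w" "closed w'"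
  shows "simrel (Reset (subst k (ctx_cont (comp_ctx G E) z) (subst x w t0)))
                (Reset (subst x w' (subst k (ctx_cont (comp_ctx G E) y) t0)))"
proof -
  have closed_conts: "closed (ctx_cont (comp_ctx G E) z)" "closed (ctx_cont (comp_ctx G E) y)"
    using assms(2) closed_E by auto
  have "simrel (ctx_cont (comp_ctx G E) z) (ctx_cont (comp_ctx G E) y)"
    using simrel.cont_alpha[of "comp_ctx G E" z y] assms(1,2) pure_E closed_E by simp
  moreover have "simrel (subst x w t0) (subst x w' t0)"
    using assms(3-5) by (rule simrel_subst[OF simrel_refl])
  ultimately show ?thesis
    using assms(5) closed_conts
    by (auto simp: subst_subst_commute[OF x_neq_k] intro!: simrel.Reset simrel_subst)
qed

lemma simrel_ctx_cont_arg:
  "pure G \<Longrightarrow> fvc G = {} \<Longrightarrow> ctx_rel G1 G1' \<Longrightarrow>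
    simrel (ctx_cont (comp_ctx G (CArg (Lam x body) G1)) z) (ctx_cont (CArg (shifted_fun G y) G1') z)"
  by (auto intro!: simrel.Lam simrel.shifted simrel_plug simrel.Var)

lemma sos_shift_body:
  "pure G \<Longrightarrow> fvc G = {} \<Longrightarrow>
    sos (Reset (plug G (subst x w body))) (Reset (subst k (ctx_cont (comp_ctx G E) y) (subst x w t0)))"
  using sos.shift[of "comp_ctx G E" y k "subst x w t0"] pure_E closed_E by (simp add: subst_body)

lemma sos_beta_shifted_fun:
  "is_val w \<Longrightarrow>
    sos (Reset (App (shifted_fun G y) w)) (Reset (subst x w (subst k (ctx_cont (comp_ctx G E) y) t0)))"
  by (auto simp: shifted_fun_def intro!: sos.reset sos.beta)

lemma simrel_sim_beta:
  assumes "is_val v" "simrel (App (Lam y t) v) p'" "closed v" "closed p'"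
  shows "\<exists>q'. sos p' q' \<and> simrel (subst y v t) q'"
proof -
  from assms(2) obtain a' v' where p': "p' = App a' v'" "simrel (Lam y t) a'" "simrel v v'"
    by (auto elim: simrel_AppE)
  have v': "is_val v'" "closed v'" using assms p' simrel_is_val by auto
  from p'(2) show ?thesis
  proof (cases rule: simrel_LamE)
    case (Lam t')
    then show ?thesis using p' v' assms(3) by (auto intro!: sos.beta simrel_subst)
  next
    case (cont_alpha G z)
    then have "sos p' (Reset (plug G v'))"
      using sos.beta[OF v'(1), of z "Reset (plug G (Var z))"] p' by (simp add: subst_plug)
    moreover have "simrel (subst y v t) (Reset (plug G v'))"
      using cont_alpha p' by (simp add: subst_plug simrel.Reset simrel_plug ctx_rel_refl)
    ultimately show ?thesis by blast
  qed
qed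

lemma simrel_sim_reset_val:
  assumes "is_val v" "simrel (Reset v) p'"
  shows "\<exists>q'. sos p' q' \<and> simrel v q'"
  using assms(2)
proof (cases rule: simrel_ResetE)
  case (Reset v')
  then show ?thesis using assms(1) simrel_is_val by (auto intro: sos.reset_val)
qed (use assms(1) in auto)

lemma simrel_sim_shift:
  assumes "pure G" "z \<notin> fvc G" "simrel (Reset (plug G (Shift j s))) p'"
    and "closed (plug G (Shift j s))" "closed p'"
  shows "\<exists>q'. sos p' q' \<and> simrel (Reset (subst j (ctx_cont G z) s)) q'"
  using assms(3)
proof (cases rule: simrel_ResetE)
  case (Reset t')
  from simrel_pure_plug_left[OF assms(1) Reset(2)] obtain G' s' where
    G': "t' = plug G' (Shift j s')" "pure G'" "ctx_rel G G'" "simrel s s'"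
    by (auto elim: simrel_ShiftE)
  then have "sos p' (Reset (subst j (ctx_cont G' z) s'))"
    using sos.shift[of G' z j s'] Reset assms(5) by simp
  moreover have "simrel (Reset (subst j (ctx_cont G z) s)) (Reset (subst j (ctx_cont G' z) s'))"
    using G' Reset assms(4,5) by (auto intro!: simrel.Reset simrel_subst simrel_ctx_cont)
  ultimately show ?thesis by blast
next
  case (shifted G0 u u' y)
  from pure_plug_App_eq_plug_Shift[of G0 G "Lam x body" u j s] shifted assms(1)
  obtain G1 where G1: "pure G1" "G = comp_ctx G0 (CArg (Lam x body) G1)" "u = plug G1 (Shift j s)"
    by auto
  have "simrel (plug G1 (Shift j s)) u'" using shifted G1 by simp
  from simrel_pure_plug_left[OF G1(1) this] obtain G1' s' where
    G1': "u' = plug G1' (Shift j s')" "pure G1'" "ctx_rel G1 G1'" "simrel s s'"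
    by (auto elim: simrel_ShiftE)
  let ?G' = "CArg (shifted_fun G0 y) G1'"
  have "sos p' (Reset (subst j (ctx_cont ?G' z) s'))"
    using sos.shift[of ?G' z j s'] assms(5) shifted G1' closed_shifted_fun[of G0 y]
    by (simp add: closed_def)
  moreover have "simrel (Reset (subst j (ctx_cont G z) s)) (Reset (subst j (ctx_cont ?G' z) s'))"
  proof (intro simrel.Reset simrel_subst)
    show "simrel (ctx_cont G z) (ctx_cont ?G' z)"
      using simrel_ctx_cont_arg G1 G1' shifted by simp
    show "closed (ctx_cont G z)"
      using assms(4) by simp
    show "closed (ctx_cont ?G' z)"
      using assms(5) shifted G1' closed_shifted_fun[of G0 y] by (auto simp: closed_def)
  qed (rule G1'(4))
  ultimately show ?thesis by blast
next
  case (shifted_beta G0 w w' y)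
  with pure_plug_Shift_inj[of G "comp_ctx G0 E" j s k "subst x w t0"] assms(1) pure_E
  have G: "G = comp_ctx G0 E" "j = k" "s = subst x w t0" by auto
  have "sos p' (Reset (subst x w' (subst k (ctx_cont (comp_ctx G0 E) y) t0)))"
    using sos_beta_shifted_fun shifted_beta by simp
  moreover have "simrel (Reset (subst j (ctx_cont G z) s)) \<dots>"
    unfolding G using simrel_captured shifted_beta by blast
  ultimately show ?thesis by blast
qed

lemma simrel_sim_shifted:
  assumes "pure G" "fvc G = {}" "simrel u u'" "closed u" "closed u'"
    and sim_arg: "\<And>u2. sos u u2 \<Longrightarrow> \<exists>u3. sos\<^sup>*\<^sup>* u' u3 \<and> simrel u2 u3"
    and "sos (plug G (App (Lam x body) u)) t2"
  shows "\<exists>q'. sos\<^sup>*\<^sup>* (Reset (App (shifted_fun G y) u')) q' \<and> simrel (Reset t2) q'"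
proof -
  from sos_pure_plug_App_cases[OF assms(1) _ assms(7)]
  consider "is_val u" "t2 = plug G (subst x u body)"
    | u2 where "sos u u2" "t2 = plug G (App (Lam x body) u2)"
    by auto
  then show ?thesis
  proof cases
    case 1
    then have "simrel (Reset t2) (Reset (App (shifted_fun G y) u'))"
      using assms(1-5) simrel_is_val[of u u'] by (auto simp: subst_body intro!: simrel.shifted_beta)
    then show ?thesis by blast
  next
    case (2 u2)
    with sim_arg obtain u3 where u3: "sos\<^sup>*\<^sup>* u' u3" "simrel u2 u3"
      by blast
    have "sos\<^sup>*\<^sup>* (Reset (App (shifted_fun G y) u')) (Reset (App (shifted_fun G y) u3))"
      using sos_rtranclp_plug[OF u3(1), of "CReset (CArg (shifted_fun G y) Hole)"] by simp
    moreover have "simrel (Reset t2) (Reset (App (shifted_fun G y) u3))"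
      using 2 u3 assms(1,2) by (auto intro!: simrel.shifted)
    ultimately show ?thesis by blast
  qed
qed

lemma simrel_sim_reset:
  assumes IH: "\<And>u u2 u'. size u < size (Reset t) \<Longrightarrow> sos u u2 \<Longrightarrow> simrel u u' \<Longrightarrow>
      closed u \<Longrightarrow> closed u' \<Longrightarrow> \<exists>u3. sos\<^sup>*\<^sup>* u' u3 \<and> simrel u2 u3"
    and "sos t t2" "simrel (Reset t) p'" "closed t" "closed p'"
  shows "\<exists>q'. sos\<^sup>*\<^sup>* p' q' \<and> simrel (Reset t2) q'"
  using assms(3)
proof (cases rule: simrel_ResetE)
  case (Reset t')
  with IH[of t t2 t'] assms(2,4,5) obtain t3 where "sos\<^sup>*\<^sup>* t' t3" "simrel t2 t3"
    by auto
  then show ?thesis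
    using sos_rtranclp_plug[of t' t3 "CReset Hole"] Reset by (auto intro!: simrel.Reset)
next
  case (shifted G u u' y)
  have "size u < size (Reset t)"
    using shifted size_plug[of "App (Lam x body) u" G] by simp
  then show ?thesis
    using simrel_sim_shifted[of G u u'] IH shifted assms(2,4,5) by auto
next
  case (shifted_beta G w w' y)
  then show ?thesis
    using assms(2) pure_plug_Shift_not_sos[of "comp_ctx G E"] pure_E by auto
qed

lemma simrel_simulation:
  "sos p q \<Longrightarrow> simrel p p' \<Longrightarrow> closed p \<Longrightarrow> closed p' \<Longrightarrow> \<exists>q'. sos\<^sup>*\<^sup>* p' q' \<and> simrel q q'"
proof (induction p arbitrary: p' q rule: measure_induct_rule[of size])
  case (less p)
  from less.prems(1) show ?case
  proof (cases rule: sos.cases)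
    case (beta v y t)
    with simrel_sim_beta[of v y t p'] less.prems obtain q' where "sos p' q'" "simrel q q'"
      by auto
    then show ?thesis by blast
  next
    case (app_left s s' t)
    with less.prems obtain a' b' where p': "p' = App a' b'" "simrel s a'" "simrel t b'"
      by (auto elim: simrel_AppE)
    with less.IH[of s s' a'] app_left less.prems obtain a'' where "sos\<^sup>*\<^sup>* a' a''" "simrel s' a''"
      by auto
    then show ?thesis
      using sos_rtranclp_plug[of a' a'' "CFun Hole b'"] p' app_left by (auto intro!: simrel.App)
  next
    case (app_right v t t')
    with less.prems obtain a' b' where p': "p' = App a' b'" "simrel v a'" "simrel t b'"
      by (auto elim: simrel_AppE)
    with less.IH[of t t' b'] app_right less.prems obtain b'' where "sos\<^sup>*\<^sup>* b' b''" "simrel t' b''"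
      by auto
    then show ?thesis
      using sos_rtranclp_plug[of b' b'' "CArg a' Hole"] p' app_right simrel_is_val[of v a']
      by (auto intro!: simrel.App)
  next
    case (reset t t')
    then show ?thesis using simrel_sim_reset[OF less.IH] less.prems by simp
  next
    case reset_val
    with simrel_sim_reset_val[of q p'] less.prems obtain q' where "sos p' q'" "simrel q q'"
      by auto
    then show ?thesis by blast
  next
    case (shift G z j s)
    with simrel_sim_shift[of G z j s p'] less.prems obtain q' where "sos p' q'" "simrel q q'"
      by auto
    then show ?thesis by blast
  qed
qed

lemma simrel_sim_beta':
  assumes "is_val v'" "simrel p (App (Lam y t') v')" "closed p" "closed v'"
  shows "\<exists>q. sos p q \<and> simrel q (subst y v' t')"
proof -
  from assms(2) obtain a v where p: "p = App a v" "simrel a (Lam y t')" "simrel v v'"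
    by (auto elim: simrel_AppE')
  have v: "is_val v" "closed v" using assms p simrel_is_val by auto
  from p(2) show ?thesis
  proof (cases rule: simrel_LamE')
    case (Lam t)
    then show ?thesis using p v assms(4) by (auto intro!: sos.beta simrel_subst)
  next
    case (cont_alpha G z)
    then have "sos p (Reset (plug G v))"
      using sos.beta[OF v(1), of z "Reset (plug G (Var z))"] p by (simp add: subst_plug)
    moreover have "simrel (Reset (plug G v)) (subst y v' t')"
      using cont_alpha p by (simp add: subst_plug simrel.Reset simrel_plug ctx_rel_refl)
    ultimately show ?thesis by blast
  qed
qed

lemma simrel_sim_reset_val':
  assumes "is_val v'" "simrel p (Reset v')"
  shows "\<exists>q. sos p q \<and> simrel q v'"
  using assms(2)
proof (cases rule: simrel_ResetE')
  case (Reset v)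
  then show ?thesis using assms(1) simrel_is_val by (auto intro: sos.reset_val)
qed (use assms(1) in auto)

lemma simrel_sim_shift':
  assumes "pure G'" "z \<notin> fvc G'" "simrel p (Reset (plug G' (Shift j s')))"
    and "closed p" "closed (plug G' (Shift j s'))"
  shows "\<exists>q. sos p q \<and> simrel q (Reset (subst j (ctx_cont G' z) s'))"
  using assms(3)
proof (cases rule: simrel_ResetE')
  case (Reset t)
  from simrel_pure_plug_right[OF assms(1) Reset(2)] obtain G s where
    G: "t = plug G (Shift j s)" "pure G" "ctx_rel G G'" "simrel s s'"
    by (auto elim: simrel_ShiftE')
  then have "sos p (Reset (subst j (ctx_cont G z) s))"
    using sos.shift[of G z j s] Reset assms(4) by simp
  moreover have "simrel (Reset (subst j (ctx_cont G z) s)) (Reset (subst j (ctx_cont G' z) s'))"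
    using G Reset assms(4,5) by (auto intro!: simrel.Reset simrel_subst simrel_ctx_cont)
  ultimately show ?thesis by blast
next
  case (shifted G0 u u' y)
  from pure_plug_App_eq_plug_Shift[of Hole G' "shifted_fun G0 y" u' j s'] shifted assms(1)
  obtain G1' where G1': "pure G1'" "G' = CArg (shifted_fun G0 y) G1'" "u' = plug G1' (Shift j s')"
    by auto
  have "simrel u (plug G1' (Shift j s'))" using shifted G1' by simp
  from simrel_pure_plug_right[OF G1'(1) this] obtain G1 s where
    G1: "u = plug G1 (Shift j s)" "pure G1" "ctx_rel G1 G1'" "simrel s s'"
    by (auto elim: simrel_ShiftE')
  let ?G = "comp_ctx G0 (CArg (Lam x body) G1)"
  have "sos p (Reset (subst j (ctx_cont ?G z) s))"
    using sos.shift[of ?G z j s] assms(4) shifted G1 closed_Lam_body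
    by (auto simp: closed_def)
  moreover have "simrel (Reset (subst j (ctx_cont ?G z) s)) (Reset (subst j (ctx_cont G' z) s'))"
  proof (intro simrel.Reset simrel_subst)
    show "simrel (ctx_cont ?G z) (ctx_cont G' z)"
      using simrel_ctx_cont_arg G1 G1' shifted by simp
    show "closed (ctx_cont G' z)"
      using assms(5) by simp
    show "closed (ctx_cont ?G z)"
      using assms(4) shifted G1 closed_Lam_body by (auto simp: closed_def)
  qed (rule G1(4))
  ultimately show ?thesis by blast
next
  case (shifted_beta G0 w w' y)
  with pure_plug_App_eq_plug_Shift[of Hole G' "shifted_fun G0 y" w' j s'] assms(1)
  show ?thesis by auto
qed

lemma simrel_sim_shifted':
  assumes "pure G" "fvc G = {}" "simrel u u'" "closed u" "closed u'"
    and sim_arg: "\<And>u2. sos u' u2 \<Longrightarrow> \<exists>u3. sos\<^sup>*\<^sup>* u u3 \<and> simrel u3 u2"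
    and "sos (App (shifted_fun G y) u') t2"
  shows "\<exists>q. sos\<^sup>*\<^sup>* (Reset (plug G (App (Lam x body) u))) q \<and> simrel q (Reset t2)"
proof -
  let ?c = "ctx_cont (comp_ctx G E) y"
  from sos_pure_plug_App_cases[of Hole "shifted_fun G y" u' t2] assms(7)
  consider "is_val u'" "t2 = subst x u' (subst k ?c t0)"
    | u2 where "sos u' u2" "t2 = App (shifted_fun G y) u2"
    by (auto simp: shifted_fun_def)
  then show ?thesis
  proof cases
    case 1
    then have "is_val u" using assms(3) simrel_is_val by blast
    then have "sos (Reset (plug G (App (Lam x body) u))) (Reset (plug G (subst x u body)))"
      using assms(1) by (auto intro!: sos.reset sos_plug sos.beta pure_imp_evctx)
    moreover note sos_shift_body[OF assms(1,2), of u y]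
    moreover have "simrel (Reset (subst k ?c (subst x u t0))) (Reset t2)"
      using simrel_captured[of G u u' y y] 1 assms(1-5) by simp
    ultimately show ?thesis by (meson converse_rtranclp_into_rtranclp r_into_rtranclp)
  next
    case (2 u2)
    with sim_arg obtain u3 where u3: "sos\<^sup>*\<^sup>* u u3" "simrel u3 u2"
      by blast
    have "sos\<^sup>*\<^sup>* (Reset (plug G (App (Lam x body) u))) (Reset (plug G (App (Lam x body) u3)))"
      using sos_rtranclp_plug[OF u3(1), of "CReset (comp_ctx G (CArg (Lam x body) Hole))"]
        assms(1) pure_imp_evctx
      by simp
    moreover have "simrel (Reset (plug G (App (Lam x body) u3))) (Reset t2)"
      using 2 u3 assms(1,2) by (auto intro!: simrel.shifted)
    ultimately show ?thesis by blast
  qed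
qed

lemma simrel_sim_reset':
  assumes IH: "\<And>u' u2 u. size u' < size (Reset t') \<Longrightarrow> sos u' u2 \<Longrightarrow> simrel u u' \<Longrightarrow>
      closed u \<Longrightarrow> closed u' \<Longrightarrow> \<exists>u3. sos\<^sup>*\<^sup>* u u3 \<and> simrel u3 u2"
    and "sos t' t2" "simrel p (Reset t')" "closed p" "closed t'"
  shows "\<exists>q. sos\<^sup>*\<^sup>* p q \<and> simrel q (Reset t2)"
  using assms(3)
proof (cases rule: simrel_ResetE')
  case (Reset t)
  with IH[of t' t2 t] assms(2,4,5) obtain t3 where "sos\<^sup>*\<^sup>* t t3" "simrel t3 t2"
    by auto
  then show ?thesis
    using sos_rtranclp_plug[of t t3 "CReset Hole"] Reset by (auto intro!: simrel.Reset)
next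
  case (shifted G u u' y)
  have closed: "closed u" "closed u'"
    using shifted assms(4,5) by auto
  have "\<exists>u3. sos\<^sup>*\<^sup>* u u3 \<and> simrel u3 u2" if "sos u' u2" for u2
    using IH[of u' u2 u] that shifted closed by simp
  then show ?thesis
    using simrel_sim_shifted'[of G u u' y t2] shifted closed assms(2) by simp
next
  case (shifted_beta G w w' y)
  let ?c = "ctx_cont (comp_ctx G E) y"
  from sos_pure_plug_App_cases[of Hole "shifted_fun G y" w' t2] shifted_beta assms(2)
  have "t2 = subst x w' (subst k ?c t0)"
    by (auto simp: shifted_fun_def dest: val_not_sos)
  moreover have "sos p (Reset (subst k ?c (subst x w t0)))"
    using sos_shift_body[OF shifted_beta(3,4), of w y] shifted_beta by (simp add: subst_body)
  moreover have "simrel (Reset (subst k ?c (subst x w t0))) (Reset (subst x w' (subst k ?c t0)))"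
    using simrel_captured[of G w w' y y] shifted_beta by simp
  ultimately show ?thesis by blast
qed

lemma simrel_simulation':
  "sos p' q' \<Longrightarrow> simrel p p' \<Longrightarrow> closed p \<Longrightarrow> closed p' \<Longrightarrow> \<exists>q. sos\<^sup>*\<^sup>* p q \<and> simrel q q'"
proof (induction p' arbitrary: p q' rule: measure_induct_rule[of size])
  case (less p')
  from less.prems(1) show ?case
  proof (cases rule: sos.cases)
    case (beta v' y t')
    with simrel_sim_beta'[of v' p y t'] less.prems obtain q where "sos p q" "simrel q q'"
      by auto
    then show ?thesis by blast
  next
    case (app_left s' s'' t')
    with less.prems obtain a b where p: "p = App a b" "simrel a s'" "simrel b t'"
      by (auto elim: simrel_AppE')
    with less.IH[of s' s'' a] app_left less.prems obtain a' where "sos\<^sup>*\<^sup>* a a'" "simrel a' s''"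
      by auto
    then show ?thesis
      using sos_rtranclp_plug[of a a' "CFun Hole b"] p app_left by (auto intro!: simrel.App)
  next
    case (app_right v' t' t'')
    with less.prems obtain a b where p: "p = App a b" "simrel a v'" "simrel b t'"
      by (auto elim: simrel_AppE')
    with less.IH[of t' t'' b] app_right less.prems obtain b' where "sos\<^sup>*\<^sup>* b b'" "simrel b' t''"
      by auto
    then show ?thesis
      using sos_rtranclp_plug[of b b' "CArg a Hole"] p app_right simrel_is_val[of a v']
      by (auto intro!: simrel.App)
  next
    case (reset t' t'')
    then show ?thesis using simrel_sim_reset'[OF less.IH] less.prems by simp
  next
    case reset_val
    with simrel_sim_reset_val'[of q' p] less.prems obtain q where "sos p q" "simrel q q'"
      by auto
    then show ?thesis by blast
  next
    case (shift G' z j s')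
    with simrel_sim_shift'[of G' z p j s'] less.prems obtain q where "sos p q" "simrel q q'"
      by auto
    then show ?thesis by blast
  qed
qed

end

section \<open>The environmental bisimulation\<close>

locale shift_lifting_redex = shift_lifting +
  fixes t1 :: trm
  assumes closed_t1: "closed t1"
begin

definition lhs :: trm where
  "lhs = App (Lam x body) t1"

definition rhs :: trm where
  "rhs = plug E (Shift k (App (Lam x t0) t1))"

definition envs :: "env set" where
  "envs = {Env. env_ok Env \<and> (\<forall>(a, b) \<in> Env. simrel a b)}"

text \<open>A program \<open>\<langle>G[rhs]\<rangle>\<close> is related by \<open>simrel\<close> to \<open>\<langle>G[lhs]\<rangle>\<close> only
  after its first step, hence the second set of triples.\<close>

definition triples :: "(env \<times> trm \<times> trm) set" where
  "triples = {(Env, a, b). Env \<in> envs \<and> simrel a b \<and> closed a \<and> closed b}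
      \<union> {({}, Reset (plug G lhs), Reset (plug G rhs)) | G. pure G \<and> fvc G = {}}
      \<union> {({}, lhs, rhs)}"

lemma empty_in_envs [simp]: "{} \<in> envs"
  by (simp add: envs_def env_ok_def)

lemma insert_in_envs:
  "Env \<in> envs \<Longrightarrow> simrel v0 v1 \<Longrightarrow> closed v0 \<Longrightarrow> closed v1 \<Longrightarrow> is_val v0 \<Longrightarrow> is_val v1 \<Longrightarrow>
    insert (v0, v1) Env \<in> envs"
  by (auto simp: envs_def env_ok_def)

lemma tilde_raw_imp_simrel: "tilde_raw Env a b \<Longrightarrow> Env \<in> envs \<Longrightarrow> simrel a b"
  by (induction rule: tilde_raw.induct) (auto simp: envs_def intro: simrel.intros)

lemma hat_imp_ctx_rel: "hat Env F0 F1 \<Longrightarrow> Env \<in> envs \<Longrightarrow> ctx_rel F0 F1"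
  by (induction rule: hat.induct) (auto simp: tilde_def tilde_raw_imp_simrel)

lemma closed_lhs: "closed lhs"
  using closed_Lam_body closed_t1 by (simp add: lhs_def)

lemma closed_rhs: "closed rhs"
  using closed_E fv_t0 closed_t1 by (auto simp: rhs_def closed_def)

lemma simrel_lhs: "pure G \<Longrightarrow> fvc G = {} \<Longrightarrow> simrel (Reset (plug G lhs)) (Reset (App (shifted_fun G z) t1))"
  by (simp add: lhs_def simrel.shifted simrel_refl)

lemma sos_rhs_iff:
  assumes "pure G" "fvc G = {}"
  shows "sos (Reset (plug G rhs)) r \<longleftrightarrow> (\<exists>z. r = Reset (App (shifted_fun G z) t1))"
proof -
  have rhs: "plug G rhs = plug (comp_ctx G E) (Shift k (App (Lam x t0) t1))"
    by (simp add: rhs_def)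
  have shift_result: "subst k (ctx_cont (comp_ctx G E) z) (App (Lam x t0) t1) = App (shifted_fun G z) t1"
    for z using x_neq_k closed_t1 by (simp add: shifted_fun_def subst_closed)
  show ?thesis
  proof
    assume "sos (Reset (plug G rhs)) r"
    then show "\<exists>z. r = Reset (App (shifted_fun G z) t1)"
    proof (cases rule: sos.cases)
      case (reset t')
      then show ?thesis using pure_plug_Shift_not_sos[of "comp_ctx G E"] assms pure_E rhs by auto
    next
      case reset_val
      then show ?thesis using rhs by simp
    next
      case (shift G' z j s)
      with pure_plug_Shift_inj[of G' "comp_ctx G E" j s k "App (Lam x t0) t1"] assms pure_E rhs
      show ?thesis using shift_result by auto
    qed
  next
    assume "\<exists>z. r = Reset (App (shifted_fun G z) t1)"
    then show "sos (Reset (plug G rhs)) r"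
      using sos.shift[of "comp_ctx G E" _ k "App (Lam x t0) t1"] assms pure_E closed_E rhs shift_result
      by auto
  qed
qed

abbreviation progress :: "env \<Rightarrow> trm \<Rightarrow> trm \<Rightarrow> bool" where
  "progress Env p0 p1 \<equiv>
    (\<forall>p0'. step p0 p0' \<and> is_prog p0' \<longrightarrow> (\<exists>p1'. steps p1 p1' \<and> is_prog p1' \<and> (Env, p0', p1') \<in> triples)) \<and>
    (\<forall>v0. step p0 v0 \<and> is_val v0 \<longrightarrow> (\<exists>v1. steps p1 v1 \<and> is_val v1 \<and> insert (v0, v1) Env \<in> envs)) \<and>
    (\<forall>p1'. step p1 p1' \<and> is_prog p1' \<longrightarrow> (\<exists>p0'. steps p0 p0' \<and> is_prog p0' \<and> (Env, p0', p1') \<in> triples)) \<and>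
    (\<forall>v1. step p1 v1 \<and> is_val v1 \<longrightarrow> (\<exists>v0. steps p0 v0 \<and> is_val v0 \<and> insert (v0, v1) Env \<in> envs))"

lemma progress_simrel:
  assumes "Env \<in> envs" "simrel p0 p1" "closed p0" "closed p1"
  shows "progress Env p0 p1"
  unfolding step_eq_sos
proof (intro conjI allI impI; elim conjE)
  fix q0 assume q0: "sos p0 q0"
  then obtain q1 where q1: "sos\<^sup>*\<^sup>* p1 q1" "simrel q0 q1"
    using simrel_simulation assms(2-4) by blast
  have "closed q0" "closed q1" using q0 q1 assms(3,4) sos_closed sos_rtranclp_closed by blast+
  then show "is_prog q0 \<Longrightarrow> \<exists>q1. sos\<^sup>*\<^sup>* p1 q1 \<and> is_prog q1 \<and> (Env, q0, q1) \<in> triples"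
    and "is_val q0 \<Longrightarrow> \<exists>q1. sos\<^sup>*\<^sup>* p1 q1 \<and> is_val q1 \<and> insert (q0, q1) Env \<in> envs"
    using q1 assms(1) simrel_is_prog simrel_is_val insert_in_envs unfolding triples_def by blast+
next
  fix q1 assume q1: "sos p1 q1"
  then obtain q0 where q0: "sos\<^sup>*\<^sup>* p0 q0" "simrel q0 q1"
    using simrel_simulation' assms(2-4) by blast
  have "closed q0" "closed q1" using q0 q1 assms(3,4) sos_closed sos_rtranclp_closed by blast+
  then show "is_prog q1 \<Longrightarrow> \<exists>q0. sos\<^sup>*\<^sup>* p0 q0 \<and> is_prog q0 \<and> (Env, q0, q1) \<in> triples"
    and "is_val q1 \<Longrightarrow> \<exists>q0. sos\<^sup>*\<^sup>* p0 q0 \<and> is_val q0 \<and> insert (q0, q1) Env \<in> envs"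
    using q0 assms(1) simrel_is_prog simrel_is_val insert_in_envs unfolding triples_def by blast+
qed

lemma progress_lhs_rhs:
  assumes "pure G" "fvc G = {}"
  shows "progress {} (Reset (plug G lhs)) (Reset (plug G rhs))"
proof -
  let ?mid = "Reset (App (shifted_fun G 0) t1)"
  have rhs_mid: "sos (Reset (plug G rhs)) ?mid"
    using sos_rhs_iff assms by blast
  have "closed (Reset (plug G lhs))" "closed ?mid"
    using assms closed_lhs closed_shifted_fun closed_t1 by auto
  with progress_simrel[OF empty_in_envs simrel_lhs[OF assms]]
  have mid: "progress {} (Reset (plug G lhs)) ?mid" .
  show ?thesis
    unfolding step_eq_sos
  proof (intro conjI allI impI; elim conjE)
    show "\<exists>q1. sos\<^sup>*\<^sup>* (Reset (plug G rhs)) q1 \<and> is_prog q1 \<and> ({}, q0, q1) \<in> triples"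
      if "sos (Reset (plug G lhs)) q0" "is_prog q0" for q0
      using mid that rhs_mid unfolding step_eq_sos by (meson converse_rtranclp_into_rtranclp)
    show "\<exists>q1. sos\<^sup>*\<^sup>* (Reset (plug G rhs)) q1 \<and> is_val q1 \<and> insert (q0, q1) {} \<in> envs"
      if "sos (Reset (plug G lhs)) q0" "is_val q0" for q0
      using mid that rhs_mid unfolding step_eq_sos by (meson converse_rtranclp_into_rtranclp)
  next
    fix q1 assume "sos (Reset (plug G rhs)) q1"
    then obtain z where z: "q1 = Reset (App (shifted_fun G z) t1)"
      using sos_rhs_iff assms by blast
    then show "is_val q1 \<Longrightarrow> \<exists>q0. sos\<^sup>*\<^sup>* (Reset (plug G lhs)) q0 \<and> is_val q0 \<and> insert (q0, q1) {} \<in> envs"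
      by simp
    have "simrel (Reset (plug G lhs)) q1" "closed (Reset (plug G lhs))" "closed q1"
      using z assms simrel_lhs closed_lhs closed_shifted_fun closed_t1 by auto
    then show "is_prog q1 \<Longrightarrow> \<exists>q0. sos\<^sup>*\<^sup>* (Reset (plug G lhs)) q0 \<and> is_prog q0 \<and> ({}, q0, q1) \<in> triples"
      unfolding triples_def by (auto simp: is_prog_def)
  qed
qed

lemma triples_progress:
  assumes "(Env, p0, p1) \<in> triples" "is_prog p0"
  shows "progress Env p0 p1"
proof -
  from assms consider "Env \<in> envs" "simrel p0 p1" "closed p0" "closed p1"
    | G where "Env = {}" "p0 = Reset (plug G lhs)" "p1 = Reset (plug G rhs)" "pure G" "fvc G = {}"
    unfolding triples_def by (auto simp: lhs_def is_prog_def)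
  then show ?thesis
  proof cases
    case 1
    then show ?thesis by (rule progress_simrel)
  next
    case (2 G)
    show ?thesis unfolding 2(1-3) by (rule progress_lhs_rhs[OF 2(4,5)])
  qed
qed

lemma triples_plug:
  assumes "(Env, a, b) \<in> triples" "\<not> (is_prog a \<and> is_prog b)" "pure E0" "pure E1" "hat Env E0 E1"
  shows "(Env, Reset (plug E0 a), Reset (plug E1 b)) \<in> triples"
proof -
  have closed: "fvc E0 = {}" "fvc E1 = {}" using hat_fvc[OF assms(5)] by auto
  from assms(1) consider "Env \<in> envs" "simrel a b" "closed a" "closed b"
    | G where "Env = {}" "a = Reset (plug G lhs)" "b = Reset (plug G rhs)"
    | "Env = {}" "a = lhs" "b = rhs"
    unfolding triples_def by blast
  then show ?thesis
  proof cases
    case 1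
    then have "simrel (Reset (plug E0 a)) (Reset (plug E1 b))"
      using hat_imp_ctx_rel[OF assms(5)] by (auto intro: simrel.Reset simrel_plug)
    then show ?thesis using 1 closed unfolding triples_def by auto
  next
    case 2
    then show ?thesis using assms(2) by (simp add: is_prog_def)
  next
    case 3
    then show ?thesis using hat_empty assms(3-5) closed unfolding triples_def by auto
  qed
qed

lemma triples_subst:
  assumes "Env \<in> envs" "(Lam x0 s0, Lam x1 s1) \<in> Env" "tilde Env v0 v1"
  shows "(Env, subst x0 v0 s0, subst x1 v1 s1) \<in> triples"
proof -
  have ok: "env_ok Env" and rel: "\<forall>(a, b) \<in> Env. simrel a b"
    using assms(1) by (auto simp: envs_def)
  have lam: "simrel (Lam x0 s0) (Lam x1 s1)" "fv s0 \<subseteq> {x0}" "fv s1 \<subseteq> {x1}"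
    using bspec[OF rel assms(2)] bspec[OF ok[unfolded env_ok_def] assms(2)] by auto
  have v: "simrel v0 v1" "closed v0" "closed v1"
    using assms(3) tilde_raw_imp_simrel[OF _ assms(1)] unfolding tilde_def by auto
  from lam(1) have "simrel (subst x0 v0 s0) (subst x1 v1 s1)"
  proof (cases rule: simrel_LamE)
    case (Lam s')
    then show ?thesis using simrel_subst v by simp
  next
    case (cont_alpha G z)
    then show ?thesis using v by (simp add: subst_plug simrel.Reset simrel_plug ctx_rel_refl)
  qed
  then show ?thesis
    using assms(1) lam(2,3) v(2,3) closed_subst unfolding triples_def by auto
qed

lemma env_bisim_triples: "env_bisim envs triples"
  unfolding env_bisim_def
proof (intro conjI)
  show "\<forall>E \<in> envs. env_ok E"
    by (simp add: envs_def)
  show "\<forall>(Env, t0, t1) \<in> triples. env_ok Env \<and> closed t0 \<and> closed t1"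
    using closed_lhs closed_rhs by (auto simp: triples_def envs_def env_ok_def)
qed (use triples_plug triples_progress triples_subst in blast)+

lemma bisim_p_lhs_rhs: "bisim_p {} lhs rhs"
  unfolding bisim_p_def using env_bisim_triples unfolding triples_def by blast

end

theorem lemma21:
  fixes t0 t1 :: trm and E :: ctx and x k :: var
  assumes "pure E"
    and "x \<noteq> k"
    and "k \<notin> fv t1"
    and "x \<notin> fvc E"
    and "closed (App (Lam x (plug E (Shift k t0))) t1)"
    and "closed (plug E (Shift k (App (Lam x t0) t1)))"
  shows "bisim_p {} (App (Lam x (plug E (Shift k t0))) t1)
                    (plug E (Shift k (App (Lam x t0) t1)))"
proof -
  \<comment> \<open>\<open>k \<notin> fv t1\<close> is implied by the closedness of \<open>t1\<close>\<close>
  have "fvc E = {}" "closed t1"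
    using assms(4,5) by (auto simp: closed_def)
  moreover have "fv t0 \<subseteq> {x, k}"
    using assms(6) by (auto simp: closed_def)
  ultimately interpret shift_lifting_redex x k t0 E t1
    using assms(1,2) by unfold_locales
  show ?thesis
    using bisim_p_lhs_rhs unfolding lhs_def rhs_def body_def .
qed

end
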